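(* Fix a prime $p$ and $n\in\mathbb{N}$, and let $\Gamma_n=\frac1{p^n}\mathbb{Z}\times\frac1{p^n}\mathbb{Z}$. Define $\mathbb{L}^\Sigma_{p,n}:\Gamma_n\to[0,\infty)$ by $\mathbb{L}^\Sigma_{p,n}(\gamma_1,\gamma_2)=\mathbb{L}_{p,n}(\gamma_1)+\mathbb{L}_{p,n}(\gamma_2)$, where $\mathbb{L}_{p,n}$ is the restriction to $\frac1{p^n}\mathbb{Z}$ of $\mathbb{L}_p(r)=|r|+\|r\|_p$. Then $\mathbb{L}^\Sigma_{p,n}$ is a proper length function on $\Gamma_n$ that is of bounded doubling with constant $(4p^8)^4$.
   Context: $\|\cdot\|_p$ is the $p$-adic norm on $\mathbb{Q}$. A length function $\mathbb{L}$ on a discrete group satisfies $\mathbb{L}(\gamma)=0\iff\gamma=e$, $\mathbb{L}(\gamma^{-1})=\mathbb{L}(\gamma)$, $\mathbb{L}(\gamma\gamma')\le\mathbb{L}(\gamma)+\mathbb{L}(\gamma')$. With $B_{\mathbb{L}}(R)=\{\gamma:\mathbb{L}(\gamma)\le R\}$, $\mathbb{L}$ is proper if all $B_{\mathbb{L}}(R)$ are finite, and of bounded doubling with constant $C$ if it is proper and $|B_{\mathbb{L}}(2R)|\le C|B_{\mathbb{L}}(R)|$ for all $R\ge1$. *)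

theory Defs
  imports Complex_Main "HOL-Computational_Algebra.Primes" "HOL-Library.Product_Plus"
begin

definition padic_val :: "nat \<Rightarrow> rat \<Rightarrow> int" where
  "padic_val p r = (let (a, b) = quotient_of r in
      int (multiplicity (int p) a) - int (multiplicity (int p) b))"

definition padic_norm :: "nat \<Rightarrow> rat \<Rightarrow> real" where
  "padic_norm p r = (if r = 0 then 0 else real p powi (- padic_val p r))"

definition Lp :: "nat \<Rightarrow> rat \<Rightarrow> real" where
  "Lp p r = real_of_rat \<bar>r\<bar> + padic_norm p r"

definition Gamma :: "nat \<Rightarrow> nat \<Rightarrow> (rat \<times> rat) set" where
  "Gamma p n = {(a, b). \<exists>k l :: int. a = of_int k / of_nat p ^ n \<and> b = of_int l / of_nat p ^ n}"

definition LSigma :: "nat \<Rightarrow> rat \<times> rat \<Rightarrow> real" where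
  "LSigma p g = Lp p (fst g) + Lp p (snd g)"

definition length_function_on :: "'a::ab_group_add set \<Rightarrow> ('a \<Rightarrow> real) \<Rightarrow> bool" where
  "length_function_on G L \<longleftrightarrow>
     (\<forall>g\<in>G. L g = 0 \<longleftrightarrow> g = 0) \<and>
     (\<forall>g\<in>G. L (- g) = L g) \<and>
     (\<forall>g\<in>G. \<forall>h\<in>G. L (g + h) \<le> L g + L h)"

definition len_ball :: "'a set \<Rightarrow> ('a \<Rightarrow> real) \<Rightarrow> real \<Rightarrow> 'a set" where
  "len_ball G L R = {g\<in>G. L g \<le> R}"

definition proper_length_on :: "'a set \<Rightarrow> ('a \<Rightarrow> real) \<Rightarrow> bool" where
  "proper_length_on G L \<longleftrightarrow> (\<forall>R. finite (len_ball G L R))"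

definition bounded_doubling_on :: "'a set \<Rightarrow> ('a \<Rightarrow> real) \<Rightarrow> real \<Rightarrow> bool" where
  "bounded_doubling_on G L C \<longleftrightarrow> proper_length_on G L \<and>
     (\<forall>R\<ge>1. real (card (len_ball G L (2 * R))) \<le> C * real (card (len_ball G L R)))"

end

theory Submission imports Defs begin

text \<open>
  The p-adic norm is ultrametric, so \<open>L\<^sub>p(r) = |r| + \<parallel>r\<parallel>\<^sub>p\<close> is a length function on \<open>\<rat>\<close>,
  and a sum of nonnegative length functions is one on the product.

  For doubling, an element of \<open>(1/p\<^sup>n)\<int>\<close> with \<open>L\<^sub>p(r) \<le> 2T\<close> has \<open>\<parallel>r\<parallel>\<^sub>p \<le> 2T\<close>, hence lies
  in \<open>(1/p\<^sup>i)\<int>\<close> for the largest \<open>i \<le> n\<close> with \<open>p\<^sup>i \<le> 2T\<close>; so the ball of radius \<open>2T\<close> has at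
  most \<open>4Tp\<^sup>i + 1\<close> elements. Conversely the points of \<open>(1/p\<^sup>i\<^sup>-\<^sup>2)\<int>\<close> in \<open>[-T/2, T/2]\<close> have
  length at most \<open>T\<close>, so the ball of radius \<open>T\<close> has at least \<open>Tp\<^sup>i/(2p\<^sup>2)\<close> elements. Thus one-dimensional
  balls double with constant \<open>8p\<^sup>2 + 1\<close>. A ball of radius \<open>R\<close> for the sum lies between the
  products of one-dimensional balls of radii \<open>R/2\<close> and \<open>R\<close>, which squares the constant twice:
  \<open>(8p\<^sup>2 + 1)\<^sup>4 \<le> (4p\<^sup>8)\<^sup>4\<close>.
\<close>

section \<open>The p-adic norm on the rationals\<close>

lemma multiplicity_uminus_int: "multiplicity (int p) (- a) = multiplicity (int p) a"
  using multiplicity_normalize_right[of "int p" a] multiplicity_normalize_right[of "int p" "- a"]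
  by simp

lemma multiplicity_add_ge_min:
  fixes k l :: int
  assumes "prime p" and "k + l \<noteq> 0"
  shows "min (multiplicity (int p) k) (multiplicity (int p) l) \<le> multiplicity (int p) (k + l)"
proof -
  let ?m = "min (multiplicity (int p) k) (multiplicity (int p) l)"
  have "int p ^ ?m dvd k" and "int p ^ ?m dvd l"
    by (rule multiplicity_dvd'; simp)+
  then have "int p ^ ?m dvd k + l" by simp
  moreover have "\<not> is_unit (int p)"
    using prime_gt_1_nat[OF assms(1)] by simp
  ultimately show ?thesis using multiplicity_geI assms(2) by blast
qed

lemma padic_val_of_int_divide:
  assumes p: "prime p" and a: "a \<noteq> 0" and b: "b \<noteq> 0"
  shows "padic_val p (of_int a / of_int b) = int (multiplicity (int p) a) - int (multiplicity (int p) b)"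
proof -
  obtain a' b' where q: "quotient_of (of_int a / of_int b) = (a', b')" by fastforce
  have b': "b' > 0" using quotient_of_denom_pos[OF q] .
  have ab: "(of_int a / of_int b :: rat) = of_int a' / of_int b'" using quotient_of_div[OF q] .
  have a': "a' \<noteq> 0" using ab a b b' by auto
  have "of_int (a * b') = (of_int (a' * b) :: rat)" using ab b b' by (simp add: field_simps)
  then have "multiplicity (int p) (a * b') = multiplicity (int p) (a' * b)"
    by (simp only: of_int_eq_iff)
  moreover have "prime_elem (int p)" using p by simp
  ultimately have "multiplicity (int p) a + multiplicity (int p) b'
      = multiplicity (int p) a' + multiplicity (int p) b"
    using prime_elem_multiplicity_mult_distrib a b a' b' by (metis less_irrefl)
  then show ?thesis unfolding padic_val_def using q by simp
qed

lemma padic_norm_of_int_divide: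
  assumes "prime p" and "a \<noteq> 0" and "b \<noteq> 0"
  shows "padic_norm p (of_int a / of_int b)
    = real p powi (int (multiplicity (int p) b) - int (multiplicity (int p) a))"
  using assms by (simp add: padic_norm_def padic_val_of_int_divide)

lemma padic_norm_0 [simp]: "padic_norm p 0 = 0"
  unfolding padic_norm_def by simp

lemma padic_norm_nonneg: "padic_norm p r \<ge> 0"
  unfolding padic_norm_def by simp

lemma padic_norm_eq_0_iff: "prime p \<Longrightarrow> padic_norm p r = 0 \<longleftrightarrow> r = 0"
  unfolding padic_norm_def by (simp add: prime_gt_0_nat)

lemma padic_norm_uminus:
  assumes "prime p"
  shows "padic_norm p (- r) = padic_norm p r"
proof (cases "r = 0")
  case False
  obtain a b where q: "quotient_of r = (a, b)" by fastforce
  then have "b \<noteq> 0" and r: "r = of_int a / of_int b"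
    using quotient_of_denom_pos quotient_of_div by fastforce+
  with False have "a \<noteq> 0" by auto
  have "- r = of_int (- a) / of_int b" using r by simp
  then show ?thesis
    using padic_norm_of_int_divide[OF assms _ \<open>b \<noteq> 0\<close>, of "- a"]
      padic_norm_of_int_divide[OF assms \<open>a \<noteq> 0\<close> \<open>b \<noteq> 0\<close>] \<open>a \<noteq> 0\<close> r
    by (simp add: multiplicity_uminus_int)
qed simp

lemma padic_norm_add_le_max:
  assumes p: "prime p"
  shows "padic_norm p (r + s) \<le> max (padic_norm p r) (padic_norm p s)"
proof -
  obtain a b c d where "quotient_of r = (a, b)" and "quotient_of s = (c, d)" by fastforce
  then have "b \<noteq> 0" "d \<noteq> 0" and r: "r = of_int a / of_int b" and s: "s = of_int c / of_int d"
    using quotient_of_denom_pos quotient_of_div by fastforce+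
  define N k l where "N = b * d" and "k = a * d" and "l = c * b"
  have N: "N \<noteq> 0" using \<open>b \<noteq> 0\<close> \<open>d \<noteq> 0\<close> unfolding N_def by simp
  have rN: "r = of_int k / of_int N" and sN: "s = of_int l / of_int N"
    using r s \<open>b \<noteq> 0\<close> \<open>d \<noteq> 0\<close> unfolding N_def k_def l_def by simp_all
  then have rsN: "r + s = of_int (k + l) / of_int N" by (simp add: add_divide_distrib)
  consider "k = 0" | "l = 0" | "k + l = 0" | "k \<noteq> 0" "l \<noteq> 0" "k + l \<noteq> 0" by blast
  then show ?thesis
  proof cases
    case 4
    let ?v = "\<lambda>m. int (multiplicity (int p) m)"
    have "real p \<ge> 1" using prime_gt_0_nat[OF p] by simp
    moreover have "min (?v k) (?v l) \<le> ?v (k + l)"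
      using multiplicity_add_ge_min[OF p \<open>k + l \<noteq> 0\<close>] by linarith
    ultimately have "real p powi (?v N - ?v (k + l)) \<le> max (real p powi (?v N - ?v k)) (real p powi (?v N - ?v l))"
      by (auto simp: le_max_iff_disj intro!: power_int_increasing)
    then have "padic_norm p (of_int (k + l) / of_int N)
        \<le> max (padic_norm p (of_int k / of_int N)) (padic_norm p (of_int l / of_int N))"
      unfolding padic_norm_of_int_divide[OF p 4(1) N] padic_norm_of_int_divide[OF p 4(2) N]
        padic_norm_of_int_divide[OF p 4(3) N] .
    then show ?thesis using rN sN rsN by simp
  qed (use rN sN rsN padic_norm_nonneg[of p] in \<open>auto intro: max.coboundedI1\<close>)
qed

lemma Lp_nonneg: "Lp p r \<ge> 0"
  unfolding Lp_def using padic_norm_nonneg[of p r] by simp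

lemma Lp_ge_abs: "real_of_rat \<bar>r\<bar> \<le> Lp p r"
  unfolding Lp_def using padic_norm_nonneg[of p r] by simp

lemma length_function_on_UNIV_Lp:
  assumes p: "prime p"
  shows "length_function_on UNIV (Lp p)"
  unfolding length_function_on_def
proof (intro conjI ballI)
  fix r s :: rat
  show "Lp p r = 0 \<longleftrightarrow> r = 0"
    using padic_norm_nonneg[of p r] padic_norm_eq_0_iff[OF p, of r] unfolding Lp_def
    by (simp add: add_nonneg_eq_0_iff)
  show "Lp p (- r) = Lp p r"
    unfolding Lp_def by (simp add: padic_norm_uminus[OF p])
  have "real_of_rat \<bar>r + s\<bar> \<le> real_of_rat \<bar>r\<bar> + real_of_rat \<bar>s\<bar>"
    by (metis abs_triangle_ineq of_rat_add of_rat_less_eq)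
  moreover have "padic_norm p (r + s) \<le> padic_norm p r + padic_norm p s"
    using padic_norm_add_le_max[OF p, of r s] padic_norm_nonneg[of p r] padic_norm_nonneg[of p s]
    by linarith
  ultimately show "Lp p (r + s) \<le> Lp p r + Lp p s"
    unfolding Lp_def by linarith
qed

section \<open>Length functions on products\<close>

lemma length_function_on_subset:
  "length_function_on G L \<Longrightarrow> H \<subseteq> G \<Longrightarrow> length_function_on H L"
  unfolding length_function_on_def by blast

definition sum_length :: "('a \<Rightarrow> real) \<Rightarrow> ('b \<Rightarrow> real) \<Rightarrow> 'a \<times> 'b \<Rightarrow> real" where
  "sum_length L1 L2 g = L1 (fst g) + L2 (snd g)"

lemma length_function_on_sum_length:
  assumes L1: "length_function_on A L1" and nonneg1: "\<And>x. x \<in> A \<Longrightarrow> L1 x \<ge> 0"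
    and L2: "length_function_on B L2" and nonneg2: "\<And>y. y \<in> B \<Longrightarrow> L2 y \<ge> 0"
  shows "length_function_on (A \<times> B) (sum_length L1 L2)"
  unfolding length_function_on_def
proof (intro conjI ballI)
  fix g h assume "g \<in> A \<times> B" and "h \<in> A \<times> B"
  then have g: "fst g \<in> A" "snd g \<in> B" and h: "fst h \<in> A" "snd h \<in> B"
    by (simp_all add: mem_Times_iff)
  show "sum_length L1 L2 g = 0 \<longleftrightarrow> g = 0"
    using L1 L2 nonneg1[OF g(1)] nonneg2[OF g(2)] g unfolding length_function_on_def sum_length_def
    by (simp add: add_nonneg_eq_0_iff prod_eq_iff)
  show "sum_length L1 L2 (- g) = sum_length L1 L2 g"
    using L1 L2 g unfolding length_function_on_def sum_length_def by simp
  have "L1 (fst g + fst h) \<le> L1 (fst g) + L1 (fst h)" and "L2 (snd g + snd h) \<le> L2 (snd g) + L2 (snd h)"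
    using L1 L2 g h unfolding length_function_on_def by simp_all
  then show "sum_length L1 L2 (g + h) \<le> sum_length L1 L2 g + sum_length L1 L2 h"
    unfolding sum_length_def by simp
qed

lemma len_ball_sum_length_subset:
  assumes "\<And>x. x \<in> A \<Longrightarrow> L1 x \<ge> 0" and "\<And>y. y \<in> B \<Longrightarrow> L2 y \<ge> 0"
  shows "len_ball (A \<times> B) (sum_length L1 L2) R \<subseteq> len_ball A L1 R \<times> len_ball B L2 R"
  using assms unfolding len_ball_def sum_length_def by (force simp: mem_Times_iff)

lemma len_ball_half_Times_subset:
  "len_ball A L1 (R / 2) \<times> len_ball B L2 (R / 2) \<subseteq> len_ball (A \<times> B) (sum_length L1 L2) R"
  unfolding len_ball_def sum_length_def by auto

lemma card_len_ball_quadrupling: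
  assumes doubling: "\<And>T. T \<ge> 1/2 \<Longrightarrow>
      real (card (len_ball A L (2 * T))) \<le> C * real (card (len_ball A L T))"
    and "C \<ge> 0" and "R \<ge> 1"
  shows "real (card (len_ball A L (2 * R))) \<le> C ^ 2 * real (card (len_ball A L (R / 2)))"
proof -
  have "real (card (len_ball A L (2 * R))) \<le> C * real (card (len_ball A L R))"
    using doubling \<open>R \<ge> 1\<close> by simp
  also have "real (card (len_ball A L R)) \<le> C * real (card (len_ball A L (R / 2)))"
    using doubling[of "R / 2"] \<open>R \<ge> 1\<close> by simp
  finally show ?thesis using \<open>C \<ge> 0\<close> by (simp add: power2_eq_square mult_left_mono)
qed

lemma bounded_doubling_on_sum_length:
  fixes L1 :: "'a \<Rightarrow> real" and L2 :: "'b \<Rightarrow> real"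
  assumes nonneg1: "\<And>x. x \<in> A \<Longrightarrow> L1 x \<ge> 0" and nonneg2: "\<And>y. y \<in> B \<Longrightarrow> L2 y \<ge> 0"
    and proper1: "proper_length_on A L1" and proper2: "proper_length_on B L2"
    and doubling1: "\<And>T. T \<ge> 1/2 \<Longrightarrow>
      real (card (len_ball A L1 (2 * T))) \<le> C1 * real (card (len_ball A L1 T))"
    and doubling2: "\<And>T. T \<ge> 1/2 \<Longrightarrow>
      real (card (len_ball B L2 (2 * T))) \<le> C2 * real (card (len_ball B L2 T))"
    and "C1 \<ge> 0" and "C2 \<ge> 0"
  shows "bounded_doubling_on (A \<times> B) (sum_length L1 L2) ((C1 * C2) ^ 2)"
proof -
  let ?B = "len_ball (A \<times> B) (sum_length L1 L2)"
  let ?b1 = "\<lambda>T. real (card (len_ball A L1 T))" and ?b2 = "\<lambda>T. real (card (len_ball B L2 T))"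
  have fin1: "finite (len_ball A L1 T)" and fin2: "finite (len_ball B L2 T)" for T
    using proper1 proper2 unfolding proper_length_on_def by blast+
  have fin: "finite (?B R)" for R
    by (rule finite_subset[OF len_ball_sum_length_subset]) (simp_all add: nonneg1 nonneg2 fin1 fin2)
  have "real (card (?B (2 * R))) \<le> (C1 * C2) ^ 2 * real (card (?B R))" if "R \<ge> 1" for R
  proof -
    have "card (?B (2 * R)) \<le> card (len_ball A L1 (2 * R) \<times> len_ball B L2 (2 * R))"
      by (intro card_mono len_ball_sum_length_subset nonneg1 nonneg2) (simp_all add: fin1 fin2)
    then have "real (card (?B (2 * R))) \<le> ?b1 (2 * R) * ?b2 (2 * R)"
      by (simp add: card_cartesian_product flip: of_nat_mult)
    also have "\<dots> \<le> (C1 ^ 2 * ?b1 (R / 2)) * (C2 ^ 2 * ?b2 (R / 2))"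
      using card_len_ball_quadrupling[OF doubling1 \<open>C1 \<ge> 0\<close> that]
        card_len_ball_quadrupling[OF doubling2 \<open>C2 \<ge> 0\<close> that]
      by (intro mult_mono) simp_all
    also have "\<dots> = (C1 * C2) ^ 2 * (?b1 (R / 2) * ?b2 (R / 2))"
      by (simp add: power_mult_distrib)
    also have "?b1 (R / 2) * ?b2 (R / 2) \<le> real (card (?B R))"
      using card_mono[OF fin len_ball_half_Times_subset]
      by (simp add: card_cartesian_product flip: of_nat_mult)
    finally show ?thesis by (simp add: mult_left_mono)
  qed
  then show ?thesis
    using fin unfolding bounded_doubling_on_def proper_length_on_def by blast
qed

lemma bounded_doubling_on_mono:
  assumes "bounded_doubling_on G L C" and "C \<le> C'"
  shows "bounded_doubling_on G L C'"
  unfolding bounded_doubling_on_def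
proof (intro conjI allI impI)
  show "proper_length_on G L" using assms(1) unfolding bounded_doubling_on_def by blast
  fix R :: real assume "R \<ge> 1"
  then have "real (card (len_ball G L (2 * R))) \<le> C * real (card (len_ball G L R))"
    using assms(1) unfolding bounded_doubling_on_def by blast
  also have "\<dots> \<le> C' * real (card (len_ball G L R))"
    using assms(2) by (intro mult_right_mono) simp_all
  finally show "real (card (len_ball G L (2 * R))) \<le> C' * real (card (len_ball G L R))" .
qed

section \<open>Balls in (1/p^n)Z\<close>

definition frac_ints :: "nat \<Rightarrow> nat \<Rightarrow> rat set" where
  "frac_ints p n = range (\<lambda>k::int. of_int k / of_nat p ^ n)"

lemma frac_intsI: "r = of_int k / of_nat p ^ n \<Longrightarrow> r \<in> frac_ints p n"
  unfolding frac_ints_def by (rule range_eqI)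

lemma Gamma_eq_frac_ints_Times: "Gamma p n = frac_ints p n \<times> frac_ints p n"
  unfolding Gamma_def frac_ints_def by auto

lemma frac_ints_mono:
  assumes "p > 0" and "j \<le> n"
  shows "frac_ints p j \<subseteq> frac_ints p n"
proof
  fix r assume "r \<in> frac_ints p j"
  then obtain k where "r = of_int k / of_nat p ^ j" unfolding frac_ints_def by blast
  moreover have "(of_nat p ^ n :: rat) = of_nat p ^ (n - j) * of_nat p ^ j"
    using assms(2) by (simp flip: power_add)
  ultimately have "r = of_int (k * int p ^ (n - j)) / of_nat p ^ n"
    using assms(1) by simp
  then show "r \<in> frac_ints p n" by (rule frac_intsI)
qed

lemma padic_norm_frac_ints_le:
  assumes p: "prime p" and "r \<in> frac_ints p j"
  shows "padic_norm p r \<le> real p ^ j"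
proof -
  obtain k where r: "r = of_int k / of_int (int p ^ j)"
    using assms(2) unfolding frac_ints_def by auto
  show ?thesis
  proof (cases "k = 0")
    case False
    have "prime_elem (int p)" and "real p \<ge> 1" using p prime_gt_0_nat[OF p] by simp_all
    then have "padic_norm p r = real p powi (int j - int (multiplicity (int p) k))"
      using padic_norm_of_int_divide[OF p False, of "int p ^ j"] r prime_gt_0_nat[OF p] by simp
    also have "\<dots> \<le> real p powi int j"
      using \<open>real p \<ge> 1\<close> by (intro power_int_increasing) simp_all
    finally show ?thesis by simp
  qed (simp add: r)
qed

lemma frac_ints_denominator_le_padic_norm:
  assumes p: "prime p" and "r \<in> frac_ints p n"
  obtains d where "d \<le> n" and "r \<in> frac_ints p d" and "real p ^ d \<le> max 1 (padic_norm p r)"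
proof -
  obtain k where r: "r = of_int k / of_nat p ^ n"
    using assms(2) unfolding frac_ints_def by auto
  have "p > 0" using prime_gt_0_nat[OF p] .
  show ?thesis
  proof (cases "k = 0")
    case True
    then have "r \<in> frac_ints p 0" using r frac_intsI[of 0 0 p 0] by simp
    then show ?thesis using that[of 0] by simp
  next
    case False
    define v where "v = multiplicity (int p) k"
    obtain k' where k: "k = int p ^ v * k'"
      using multiplicity_dvd[of "int p" k] unfolding v_def dvd_def by blast
    show ?thesis
    proof (cases "n \<le> v")
      case True
      then have "k = k' * int p ^ (v - n) * int p ^ n"
        using k by (simp add: power_add[symmetric])
      then have "r = of_int (k' * int p ^ (v - n)) / of_nat p ^ 0"
        using r \<open>p > 0\<close> by simp
      then have "r \<in> frac_ints p 0" by (rule frac_intsI)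
      then show ?thesis using that[of 0] by simp
    next
      case False
      then have "(of_nat p ^ n :: rat) = of_nat p ^ v * of_nat p ^ (n - v)"
        by (simp flip: power_add)
      then have "r = of_int k' / of_nat p ^ (n - v)"
        using r k \<open>p > 0\<close> by simp
      then have "r \<in> frac_ints p (n - v)" by (rule frac_intsI)
      have "padic_norm p r = real p powi (int n - int v)"
        using padic_norm_of_int_divide[OF p \<open>k \<noteq> 0\<close>, of "int p ^ n"] r \<open>p > 0\<close> p
        by (simp add: v_def)
      also have "int n - int v = int (n - v)" using False by simp
      finally have "padic_norm p r = real p ^ (n - v)" by simp
      then show ?thesis using that[of "n - v"] \<open>r \<in> frac_ints p (n - v)\<close> by simp
    qed
  qed
qed

lemma len_ball_frac_ints_abs:
  assumes "p > 0"
  shows "len_ball (frac_ints p j) (\<lambda>r. real_of_rat \<bar>r\<bar>) T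
    = (\<lambda>m. of_int m / of_nat p ^ j) ` {- \<lfloor>T * real p ^ j\<rfloor>..\<lfloor>T * real p ^ j\<rfloor>}"
proof -
  have iff: "real_of_rat \<bar>of_int m / of_nat p ^ j\<bar> \<le> T \<longleftrightarrow> m \<in> {- \<lfloor>T * real p ^ j\<rfloor>..\<lfloor>T * real p ^ j\<rfloor>}"
    for m :: int
  proof -
    have "real_of_rat \<bar>of_int m / of_nat p ^ j\<bar> = \<bar>real_of_rat (of_int m / of_nat p ^ j)\<bar>"
      by (rule abs_of_rat[symmetric])
    also have "\<dots> = real_of_int \<bar>m\<bar> / real p ^ j"
      by (simp add: of_rat_divide of_rat_power)
    also have "\<dots> \<le> T \<longleftrightarrow> real_of_int \<bar>m\<bar> \<le> T * real p ^ j"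
      using assms by (simp add: divide_le_eq)
    also have "\<dots> \<longleftrightarrow> \<bar>m\<bar> \<le> \<lfloor>T * real p ^ j\<rfloor>"
      by (simp add: le_floor_iff)
    also have "\<dots> \<longleftrightarrow> m \<in> {- \<lfloor>T * real p ^ j\<rfloor>..\<lfloor>T * real p ^ j\<rfloor>}"
      unfolding atLeastAtMost_iff abs_le_iff by linarith
    finally show ?thesis .
  qed
  have "len_ball (frac_ints p j) (\<lambda>r. real_of_rat \<bar>r\<bar>) T
      = (\<lambda>m. of_int m / of_nat p ^ j) ` {m. real_of_rat \<bar>of_int m / of_nat p ^ j\<bar> \<le> T}"
    unfolding len_ball_def frac_ints_def by blast
  also have "{m. real_of_rat \<bar>of_int m / of_nat p ^ j\<bar> \<le> T} = {- \<lfloor>T * real p ^ j\<rfloor>..\<lfloor>T * real p ^ j\<rfloor>}"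
    using iff by blast
  finally show ?thesis .
qed

lemma card_len_ball_frac_ints_abs:
  assumes "p > 0" and "T \<ge> 0"
  shows "real (card (len_ball (frac_ints p j) (\<lambda>r. real_of_rat \<bar>r\<bar>) T))
    = 2 * real_of_int \<lfloor>T * real p ^ j\<rfloor> + 1"
proof -
  let ?x = "\<lfloor>T * real p ^ j\<rfloor>"
  have "inj_on (\<lambda>m::int. of_int m / of_nat p ^ j :: rat) {- ?x..?x}"
    using assms(1) by (auto intro: inj_onI)
  then have "card (len_ball (frac_ints p j) (\<lambda>r. real_of_rat \<bar>r\<bar>) T) = nat (2 * ?x + 1)"
    unfolding len_ball_frac_ints_abs[OF assms(1)] by (simp add: card_image)
  moreover have "?x \<ge> 0" using assms by simp
  ultimately show ?thesis by simp
qed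

lemma card_len_ball_frac_ints_abs_bounds:
  assumes "p > 0" and "T \<ge> 0"
  shows "T * real p ^ j \<le> real (card (len_ball (frac_ints p j) (\<lambda>r. real_of_rat \<bar>r\<bar>) T))"
    and "real (card (len_ball (frac_ints p j) (\<lambda>r. real_of_rat \<bar>r\<bar>) T)) \<le> 2 * T * real p ^ j + 1"
proof -
  have "0 \<le> \<lfloor>T * real p ^ j\<rfloor>" using assms by simp
  then show "T * real p ^ j \<le> real (card (len_ball (frac_ints p j) (\<lambda>r. real_of_rat \<bar>r\<bar>) T))"
    using card_len_ball_frac_ints_abs[OF assms, of j] real_of_int_floor_add_one_gt[of "T * real p ^ j"]
    by linarith
  show "real (card (len_ball (frac_ints p j) (\<lambda>r. real_of_rat \<bar>r\<bar>) T)) \<le> 2 * T * real p ^ j + 1"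
    using card_len_ball_frac_ints_abs[OF assms, of j] of_int_floor_le[of "T * real p ^ j"]
    by linarith
qed

lemma finite_len_ball_frac_ints_abs:
  "p > 0 \<Longrightarrow> finite (len_ball (frac_ints p j) (\<lambda>r. real_of_rat \<bar>r\<bar>) T)"
  unfolding len_ball_frac_ints_abs by simp

lemma len_ball_Lp_subset_abs:
  assumes p: "prime p" and "T \<ge> 1"
  obtains i where "i \<le> n" and "real p ^ i \<le> T"
    and "len_ball (frac_ints p n) (Lp p) T \<subseteq> len_ball (frac_ints p i) (\<lambda>r. real_of_rat \<bar>r\<bar>) T"
proof -
  define i where "i = Max {d. d \<le> n \<and> real p ^ d \<le> T}"
  have fin: "finite {d. d \<le> n \<and> real p ^ d \<le> T}" by simp
  have "i \<in> {d. d \<le> n \<and> real p ^ d \<le> T}"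
    unfolding i_def using assms(2) by (intro Max_in fin) auto
  then have i: "i \<le> n" "real p ^ i \<le> T" by auto
  have "r \<in> frac_ints p i" if r: "r \<in> frac_ints p n" "Lp p r \<le> T" for r
  proof -
    obtain d where d: "d \<le> n" "r \<in> frac_ints p d" "real p ^ d \<le> max 1 (padic_norm p r)"
      using frac_ints_denominator_le_padic_norm[OF p r(1)] .
    have "0 \<le> real_of_rat \<bar>r\<bar>" by simp
    then have "padic_norm p r \<le> T" using r(2) unfolding Lp_def by linarith
    then have "d \<le> i" unfolding i_def using d(1,3) assms(2) by (intro Max_ge fin) auto
    then show ?thesis using frac_ints_mono[OF prime_gt_0_nat[OF p]] d(2) by blast
  qed
  moreover have "real_of_rat \<bar>r\<bar> \<le> T" if "Lp p r \<le> T" for r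
    using Lp_ge_abs[of r p] that by linarith
  ultimately show ?thesis using that i unfolding len_ball_def by blast
qed

lemma len_ball_abs_subset_Lp:
  assumes p: "prime p" and "j \<le> n"
  shows "len_ball (frac_ints p j) (\<lambda>r. real_of_rat \<bar>r\<bar>) T \<subseteq> len_ball (frac_ints p n) (Lp p) (T + real p ^ j)"
  using frac_ints_mono[OF prime_gt_0_nat[OF p] assms(2)] padic_norm_frac_ints_le[OF p]
  unfolding len_ball_def Lp_def by fastforce

lemma finite_len_ball_frac_ints_Lp:
  assumes "prime p"
  shows "finite (len_ball (frac_ints p n) (Lp p) T)"
proof (rule finite_subset)
  show "len_ball (frac_ints p n) (Lp p) T \<subseteq> len_ball (frac_ints p n) (\<lambda>r. real_of_rat \<bar>r\<bar>) T"
    using Lp_ge_abs[of _ p] unfolding len_ball_def by (auto intro: order_trans)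
qed (use finite_len_ball_frac_ints_abs prime_gt_0_nat[OF assms] in blast)

lemma proper_length_on_frac_ints_Lp: "prime p \<Longrightarrow> proper_length_on (frac_ints p n) (Lp p)"
  unfolding proper_length_on_def using finite_len_ball_frac_ints_Lp by blast

lemma card_len_ball_frac_ints_Lp_pos:
  assumes "prime p" and "T \<ge> 0"
  shows "card (len_ball (frac_ints p n) (Lp p) T) \<ge> 1"
proof -
  have "0 \<in> len_ball (frac_ints p n) (Lp p) T"
    using assms(2) frac_intsI[of 0 0 p n] unfolding len_ball_def Lp_def by simp
  then show ?thesis
    using finite_len_ball_frac_ints_Lp[OF assms(1)] by (metis card_0_eq empty_iff less_one not_le)
qed

lemma card_len_ball_frac_ints_Lp_lower:
  assumes p: "prime p" and T: "T \<ge> 1/2" and "j \<le> n" and pj: "real p ^ j \<le> 2 * T"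
  shows "T * real p ^ j \<le> 2 * real p ^ 2 * real (card (len_ball (frac_ints p n) (Lp p) T))"
proof -
  let ?B = "len_ball (frac_ints p n) (Lp p) T"
  have p2: "real p \<ge> 2" using prime_ge_2_nat[OF p] by simp
  have p2_sq: "real p ^ 2 \<ge> 4" using power_mono[OF p2, of 2] by simp
  show ?thesis
  \<comment> \<open>Either the points of \<open>(1/p\<^sup>j\<^sup>-\<^sup>2)\<int>\<close> in \<open>[-T/2, T/2]\<close> fit into the ball,
    or \<open>j < 2\<close> and \<open>T < 2\<close>, where the bound \<open>1 \<le> card\<close> suffices.\<close>
  proof (cases "real p ^ (j - 2) \<le> T / 2")
    case True
    let ?A = "len_ball (frac_ints p (j - 2)) (\<lambda>r. real_of_rat \<bar>r\<bar>) (T / 2)"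
    have "?A \<subseteq> len_ball (frac_ints p n) (Lp p) (T / 2 + real p ^ (j - 2))"
      using \<open>j \<le> n\<close> by (intro len_ball_abs_subset_Lp[OF p]) simp
    also have "\<dots> \<subseteq> ?B" using True unfolding len_ball_def by auto
    finally have "card ?A \<le> card ?B"
      by (intro card_mono finite_len_ball_frac_ints_Lp[OF p])
    moreover have "T / 2 * real p ^ (j - 2) \<le> real (card ?A)"
      using card_len_ball_frac_ints_abs_bounds(1)[OF prime_gt_0_nat[OF p], of "T / 2" "j - 2"] T
      by simp
    ultimately have card_B: "T / 2 * real p ^ (j - 2) \<le> real (card ?B)" by linarith
    have "real p ^ j \<le> real p ^ (j - 2 + 2)"
      using p2 by (intro power_increasing) simp_all
    also have "\<dots> = real p ^ (j - 2) * real p ^ 2" by (rule power_add)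
    finally have "T * real p ^ j \<le> T * (real p ^ (j - 2) * real p ^ 2)"
      using T by (intro mult_left_mono) auto
    also have "\<dots> = 2 * real p ^ 2 * (T / 2 * real p ^ (j - 2))" by simp
    also have "\<dots> \<le> 2 * real p ^ 2 * real (card ?B)"
      using card_B by (intro mult_left_mono) simp_all
    finally show ?thesis .
  next
    case False
    have "j < 2"
    proof (rule ccontr)
      assume "\<not> j < 2"
      then have "j = j - 2 + 2" by simp
      then have "real p ^ j = real p ^ (j - 2) * real p ^ 2" by (metis power_add)
      also have "\<dots> \<ge> real p ^ (j - 2) * 4" using p2_sq by (intro mult_left_mono) simp_all
      finally show False using False pj by linarith
    qed
    then have "T < 2" using False by simp
    have "T * real p ^ j \<le> 2 * real p ^ j"
      using \<open>T < 2\<close> by (intro mult_right_mono) simp_all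
    also have "\<dots> \<le> 2 * real p ^ 2"
      using \<open>j < 2\<close> p2 by (intro mult_left_mono power_increasing) simp_all
    also have "\<dots> \<le> 2 * real p ^ 2 * real (card ?B)"
      using card_len_ball_frac_ints_Lp_pos[OF p, of T n] T
        mult_left_mono[of 1 "real (card ?B)" "2 * real p ^ 2"] by simp
    finally show ?thesis .
  qed
qed

lemma card_len_ball_frac_ints_Lp_doubling:
  assumes p: "prime p" and T: "T \<ge> 1/2"
  shows "real (card (len_ball (frac_ints p n) (Lp p) (2 * T)))
    \<le> (8 * real p ^ 2 + 1) * real (card (len_ball (frac_ints p n) (Lp p) T))"
proof -
  let ?B = "\<lambda>R. len_ball (frac_ints p n) (Lp p) R"
  obtain i where "i \<le> n" and pi: "real p ^ i \<le> 2 * T"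
    and sub: "?B (2 * T) \<subseteq> len_ball (frac_ints p i) (\<lambda>r. real_of_rat \<bar>r\<bar>) (2 * T)"
    using len_ball_Lp_subset_abs[OF p, of "2 * T"] T by auto
  have "real (card (?B (2 * T)))
      \<le> real (card (len_ball (frac_ints p i) (\<lambda>r. real_of_rat \<bar>r\<bar>) (2 * T)))"
    using sub by (intro of_nat_mono card_mono finite_len_ball_frac_ints_abs prime_gt_0_nat[OF p])
  also have "\<dots> \<le> 4 * (T * real p ^ i) + 1"
    using card_len_ball_frac_ints_abs_bounds(2)[OF prime_gt_0_nat[OF p], of "2 * T" i] T by simp
  also have "\<dots> \<le> 8 * real p ^ 2 * real (card (?B T)) + real (card (?B T))"
    using card_len_ball_frac_ints_Lp_lower[OF p T \<open>i \<le> n\<close> pi]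
      card_len_ball_frac_ints_Lp_pos[OF p, of T n] T by simp
  finally show ?thesis by (simp add: algebra_simps)
qed

lemma doubling_constant_le:
  fixes x :: real
  assumes "x \<ge> 2"
  shows "((8 * x ^ 2 + 1) * (8 * x ^ 2 + 1)) ^ 2 \<le> (4 * x ^ 8) ^ 4"
proof -
  have x6: "2 ^ 6 \<le> x ^ 6" and "1 \<le> x ^ 2"
    using assms by (intro power_mono one_le_power, simp_all)
  then have "8 * x ^ 2 + 1 \<le> (4 * 2 ^ 6) * x ^ 2" by simp
  also have "\<dots> \<le> (4 * x ^ 6) * x ^ 2"
    using x6 by (intro mult_right_mono) simp_all
  also have "\<dots> = 4 * x ^ 8" by (simp flip: power_add)
  finally have "8 * x ^ 2 + 1 \<le> 4 * x ^ 8" .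
  then show ?thesis
    using power_mono[of "(8 * x ^ 2 + 1) * (8 * x ^ 2 + 1)" "(4 * x ^ 8) ^ 2" 2]
      mult_mono[of "8 * x ^ 2 + 1" "4 * x ^ 8" "8 * x ^ 2 + 1" "4 * x ^ 8"]
    by (simp add: power2_eq_square flip: power_mult)
qed

theorem corollary3p17:
  fixes p n :: nat
  assumes "prime p"
  shows "length_function_on (Gamma p n) (LSigma p)
    \<and> proper_length_on (Gamma p n) (LSigma p)
    \<and> bounded_doubling_on (Gamma p n) (LSigma p) ((4 * real p ^ 8) ^ 4)"
proof -
  let ?C = "8 * real p ^ 2 + 1"
  have LSigma: "LSigma p = sum_length (Lp p) (Lp p)"
    unfolding LSigma_def sum_length_def by simp
  have "length_function_on (UNIV \<times> UNIV) (LSigma p)"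
    unfolding LSigma by (intro length_function_on_sum_length length_function_on_UNIV_Lp assms Lp_nonneg)
  then have length: "length_function_on (Gamma p n) (LSigma p)"
    by (rule length_function_on_subset) simp
  have doubling: "bounded_doubling_on (Gamma p n) (LSigma p) ((?C * ?C) ^ 2)"
    unfolding Gamma_eq_frac_ints_Times LSigma
    by (intro bounded_doubling_on_sum_length card_len_ball_frac_ints_Lp_doubling
        proper_length_on_frac_ints_Lp assms Lp_nonneg) simp_all
  then have proper: "proper_length_on (Gamma p n) (LSigma p)"
    unfolding bounded_doubling_on_def by blast
  have "(?C * ?C) ^ 2 \<le> (4 * real p ^ 8) ^ 4"
    using prime_ge_2_nat[OF assms] by (intro doubling_constant_le) simp
  with doubling have "bounded_doubling_on (Gamma p n) (LSigma p) ((4 * real p ^ 8) ^ 4)"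
    by (rule bounded_doubling_on_mono)
  with length proper show ?thesis by blast
qed

end
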